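(* For any convex body $K\subset\mathbb{R}^n$ symmetric with respect to the origin and any sequence of positive reals $R_0<R_1<\cdots<R_s$, \[ N(D,R_0K^{\circ})\le N(D,R_sK^{\circ})\prod_{j=0}^{s-1}N\Big(D,\frac{R_j}{2}\,(K\cap R_{j+1}D)^{\circ}\Big) \] and \[ N(K,R_0D)\le N(K,R_sD)\prod_{j=0}^{s-1}N(2K\cap R_{j+1}D,\,R_jD). \]
   Context: For sets $A,B\subset\mathbb{R}^n$, the covering number $N(A,B)$ is the minimal number $N$ of points $x_1,\dots,x_N\in\mathbb{R}^n$ such that $A\subset\bigcup_{i\le N}(x_i+B)$. $D$ denotes the Euclidean unit ball of $\mathbb{R}^n$, and for a set $A$, $A^{\circ}=\{u\in\mathbb{R}^n:\sup_{x\in A}\langle x,u\rangle\le 1\}$ is its polar. *)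

theory Defs
  imports "HOL-Analysis.Analysis" "HOL-Library.Extended_Nat"
begin

definition covering_number :: "'a::real_vector set \<Rightarrow> 'a set \<Rightarrow> enat" where
  "covering_number A B =
     (INF X \<in> {X. finite X \<and> A \<subseteq> (\<Union>x\<in>X. (\<lambda>y. x + y) ` B)}. enat (card X))"

definition polar :: "'a::real_inner set \<Rightarrow> 'a set" where
  "polar A = {u. \<forall>x\<in>A. inner x u \<le> 1}"

definition sdilate :: "real \<Rightarrow> 'a::real_vector set \<Rightarrow> 'a set" where
  "sdilate r A = (\<lambda>x. r *\<^sub>R x) ` A"

definition convex_body :: "'a::euclidean_space set \<Rightarrow> bool" where
  "convex_body K \<longleftrightarrow> compact K \<and> convex K \<and> interior K \<noteq> {}"

definition origin_symmetric :: "'a::real_vector set \<Rightarrow> bool" where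
  "origin_symmetric K \<longleftrightarrow> (\<forall>x\<in>K. - x \<in> K)"

end

theory Submission
  imports Defs
begin

text \<open>
  Both inequalities telescope from one-step bounds between consecutive radii, in which a cover
  at the larger scale \<open>R\<close> is refined by a cover of the remaining pieces at the smaller scale \<open>r\<close>.

  Dual bound: by separation and the bipolar theorem, \<open>polar (K \<inter> R D) \<subseteq> polar K + R\<^sup>-\<^sup>1 D\<close>.
  So a point of \<open>D\<close> is \<open>x + (r/2) (k + d)\<close> with \<open>k \<in> polar K\<close>, \<open>R d \<in> D\<close>; covering \<open>R d\<close> by
  translates of \<open>R polar K\<close> replaces \<open>d\<close> by some \<open>k' \<in> polar K\<close> up to a centre, and
  \<open>(k + k')/2 \<in> polar K\<close> by convexity.

  Primal bound: moving the centres of a cover of \<open>K\<close> by \<open>R\<close>-balls to their nearest points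
  \<open>p \<in> K\<close> keeps the radius, the nearest-point map being 1-Lipschitz, and then
  \<open>u - p \<in> 2K \<inter> R D\<close> by symmetry and convexity of \<open>K\<close>.
\<close>

lemma mem_translate_iff: "u \<in> (+) z ` B \<longleftrightarrow> u - z \<in> (B::'a::ab_group_add set)"
  by (auto intro: image_eqI[where x = "u - z"])

lemma covering_number_le_card:
  assumes "finite X" "A \<subseteq> (\<Union>x\<in>X. (+) x ` B)"
  shows "covering_number A B \<le> enat (card X)"
  unfolding covering_number_def by (rule INF_lower) (use assms in blast)

lemma covering_number_neq_0:
  assumes "A \<noteq> {}"
  shows "covering_number A B \<noteq> 0"
proof -
  have "1 \<le> covering_number A B"
    unfolding covering_number_def
  proof (rule INF_greatest)
    fix X assume "X \<in> {X. finite X \<and> A \<subseteq> (\<Union>x\<in>X. (+) x ` B)}"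
    then have "finite X" "X \<noteq> {}" using assms by auto
    then show "1 \<le> enat (card X)" by (simp add: one_enat_def Suc_leI card_gt_0_iff)
  qed
  then show ?thesis by (metis not_one_le_zero)
qed

lemma covering_number_obtain_cover:
  assumes "covering_number A B \<noteq> \<infinity>"
  obtains X where "finite X" "A \<subseteq> (\<Union>x\<in>X. (+) x ` B)" "covering_number A B = enat (card X)"
proof -
  let ?S = "{X. finite X \<and> A \<subseteq> (\<Union>x\<in>X. (+) x ` B)}"
  have "?S \<noteq> {}"
  proof
    assume no_cover: "?S = {}"
    have "covering_number A B = \<infinity>"
      unfolding covering_number_def no_cover by (simp add: top_enat_def)
    with assms show False ..
  qed
  then have "covering_number A B \<in> (\<lambda>X. enat (card X)) ` ?S"
    unfolding covering_number_def by (auto intro: wellorder_InfI)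
  then show ?thesis using that by blast
qed

lemma covering_number_le_mult:
  fixes f :: "'a \<Rightarrow> 'a \<Rightarrow> 'a::real_vector"
  assumes "A\<^sub>1 \<noteq> {}" "A\<^sub>2 \<noteq> {}"
    and combine: "\<And>X Y a. finite X \<Longrightarrow> A\<^sub>1 \<subseteq> (\<Union>x\<in>X. (+) x ` B\<^sub>1) \<Longrightarrow>
                     finite Y \<Longrightarrow> A\<^sub>2 \<subseteq> (\<Union>y\<in>Y. (+) y ` B\<^sub>2) \<Longrightarrow>
                     a \<in> A \<Longrightarrow> \<exists>x\<in>X. \<exists>y\<in>Y. a - f x y \<in> B"
  shows "covering_number A B \<le> covering_number A\<^sub>1 B\<^sub>1 * covering_number A\<^sub>2 B\<^sub>2"
proof (cases "covering_number A\<^sub>1 B\<^sub>1 = \<infinity> \<or> covering_number A\<^sub>2 B\<^sub>2 = \<infinity>")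
  case True
  then have "covering_number A\<^sub>1 B\<^sub>1 * covering_number A\<^sub>2 B\<^sub>2 = \<infinity>"
    using covering_number_neq_0 assms(1,2) by (auto simp: imult_is_infinity)
  then show ?thesis by simp
next
  case False
  then obtain X Y where X: "finite X" "A\<^sub>1 \<subseteq> (\<Union>x\<in>X. (+) x ` B\<^sub>1)"
      "covering_number A\<^sub>1 B\<^sub>1 = enat (card X)"
    and Y: "finite Y" "A\<^sub>2 \<subseteq> (\<Union>y\<in>Y. (+) y ` B\<^sub>2)"
      "covering_number A\<^sub>2 B\<^sub>2 = enat (card Y)"
    by (metis covering_number_obtain_cover)
  define Z where "Z = case_prod f ` (X \<times> Y)"
  have "A \<subseteq> (\<Union>z\<in>Z. (+) z ` B)"
  proof
    fix a assume "a \<in> A"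
    then obtain x y where "x \<in> X" "y \<in> Y" "a - f x y \<in> B" using combine X Y by metis
    then show "a \<in> (\<Union>z\<in>Z. (+) z ` B)" unfolding Z_def by (force simp: mem_translate_iff)
  qed
  then have "covering_number A B \<le> enat (card Z)"
    using X Y unfolding Z_def by (intro covering_number_le_card) auto
  also have "card Z \<le> card X * card Y"
    unfolding Z_def by (metis card_cartesian_product card_image_le X(1) Y(1) finite_cartesian_product)
  finally show ?thesis using X Y by simp
qed

lemma mem_sdilate_iff: "x \<in> sdilate r A \<longleftrightarrow> (\<exists>a\<in>A. x = r *\<^sub>R a)"
  unfolding sdilate_def by auto

lemma sdilate_cball: "sdilate r (cball 0 1) = cball (0::'a::real_normed_vector) \<bar>r\<bar>"
  by (cases "r = 0") (auto simp: sdilate_def cball_scale image_constant_conv)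

lemma zero_in_interior_symmetric_convex:
  fixes K :: "'a::euclidean_space set"
  assumes "convex K" "origin_symmetric K" "interior K \<noteq> {}"
  shows "0 \<in> interior K"
proof -
  obtain c where c: "c \<in> interior K" using assms(3) by blast
  then have "- c \<in> K" using assms(2) interior_subset unfolding origin_symmetric_def by blast
  then have "- c - (1/2) *\<^sub>R (- c - c) \<in> interior K"
    using mem_interior_convex_shrink[OF assms(1) c] by simp
  then show ?thesis by (simp add: algebra_simps flip: scaleR_add_left)
qed

lemma diff_in_sdilate_2:
  assumes "convex K" "origin_symmetric K" "x \<in> K" "y \<in> K"
  shows "x - y \<in> sdilate 2 K"
proof -
  have "- y \<in> K" using assms(2,4) unfolding origin_symmetric_def by blast
  then have "(1/2) *\<^sub>R x + (1/2) *\<^sub>R (- y) \<in> K" using assms(1,3) by (intro convexD) auto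
  moreover have "x - y = 2 *\<^sub>R ((1/2) *\<^sub>R x + (1/2) *\<^sub>R (- y))" by (simp add: algebra_simps)
  ultimately show ?thesis unfolding mem_sdilate_iff by blast
qed

lemma zero_in_polar: "0 \<in> polar A"
  unfolding polar_def by simp

lemma polar_antimono: "A \<subseteq> B \<Longrightarrow> polar B \<subseteq> polar A"
  unfolding polar_def by auto

lemma convex_polar: "convex (polar A)"
  unfolding polar_def convex_def by (auto simp: inner_add_right intro!: convex_bound_le)

lemma closed_polar: "closed (polar (A::'a::real_inner set))"
proof -
  have "polar A = (\<Inter>x\<in>A. {u. inner x u \<le> 1})" unfolding polar_def by auto
  then show ?thesis by (auto intro!: closed_Collect_le continuous_intros)
qed

lemma polar_cball:
  assumes "0 < r"
  shows "polar (cball 0 r) = cball (0::'a::real_inner) (1/r)"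
proof (intro equalityI subsetI)
  fix u :: 'a assume u: "u \<in> polar (cball 0 r)"
  show "u \<in> cball 0 (1/r)"
  proof (cases "u = 0")
    case False
    have "(r / norm u) *\<^sub>R u \<in> cball 0 r" using assms False by simp
    then have "inner ((r / norm u) *\<^sub>R u) u \<le> 1" using u unfolding polar_def by blast
    then have "r * norm u \<le> 1" using False by (simp add: dot_square_norm power2_eq_square)
    then show ?thesis using assms by (simp add: field_simps)
  qed (use assms in simp)
next
  fix u :: 'a assume "u \<in> cball 0 (1/r)"
  then have "inner x u \<le> 1" if "norm x \<le> r" for x
    using assms that Cauchy_Schwarz_ineq2[of x u] mult_mono[OF that, of "norm u" "1/r"]
    by (simp add: field_simps)
  then show "u \<in> polar (cball 0 r)" unfolding polar_def by simp
qed

lemma bounded_polar: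
  assumes "0 \<in> interior K"
  shows "bounded (polar K)"
proof -
  obtain e where "0 < e" "cball 0 e \<subseteq> K" using assms mem_interior_cball by blast
  then have "polar K \<subseteq> cball 0 (1/e)" using polar_antimono polar_cball by metis
  then show ?thesis using bounded_cball bounded_subset by blast
qed

lemma polar_separation:
  fixes S :: "'a::euclidean_space set"
  assumes "closed S" "convex S" "0 \<in> S" "u \<notin> S"
  obtains v where "v \<in> polar S" "1 < inner v u"
proof -
  obtain a b where ab: "inner a u < b" "\<forall>x\<in>S. b < inner a x"
    using separating_hyperplane_closed_point assms by metis
  have b: "b < 0" using ab(2) assms(3) by force
  have "inner x ((1/b) *\<^sub>R a) \<le> 1" if "x \<in> S" for x
  proof -
    have "b < inner a x" using ab(2) that by blast
    then have "inner a x / b \<le> 1" using b by (simp add: field_simps)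
    then show ?thesis by (simp add: inner_commute)
  qed
  then have "(1/b) *\<^sub>R a \<in> polar S" unfolding polar_def by blast
  moreover have "1 < inner ((1/b) *\<^sub>R a) u" using ab(1) b by (simp add: field_simps)
  ultimately show ?thesis using that by blast
qed

lemma polar_polar_subset:
  fixes K :: "'a::euclidean_space set"
  assumes "closed K" "convex K" "0 \<in> K"
  shows "polar (polar K) \<subseteq> K"
proof
  fix u assume u: "u \<in> polar (polar K)"
  show "u \<in> K"
  proof (rule ccontr)
    assume "u \<notin> K"
    then obtain v where "v \<in> polar K" "1 < inner v u" using polar_separation assms by metis
    then show False using u unfolding polar_def by force
  qed
qed

lemma polar_subset_plus_polar: "polar K \<subseteq> polar K + polar L"
proof
  fix x assume "x \<in> polar K"
  then have "x + 0 \<in> polar K + polar L" by (intro set_plus_intro zero_in_polar)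
  then show "x \<in> polar K + polar L" by simp
qed

lemma polar_Int_subset_plus:
  fixes K L :: "'a::euclidean_space set"
  assumes K: "closed K" "convex K" "0 \<in> K" and L: "closed L" "convex L" "0 \<in> L"
    and "compact (polar K)"
  shows "polar (K \<inter> L) \<subseteq> polar K + polar L"
proof
  fix u assume u: "u \<in> polar (K \<inter> L)"
  let ?S = "polar K + polar L"
  have "?S = (\<Union>x\<in>polar K. \<Union>y\<in>polar L. {x + y})" by (auto simp: set_plus_def)
  then have closed: "closed ?S" using assms(7) compact_closed_sums closed_polar by metis
  have convex: "convex ?S" by (simp add: convex_set_plus convex_polar)
  have zero: "0 \<in> ?S" using set_plus_intro[OF zero_in_polar zero_in_polar] by simp
  have "polar ?S \<subseteq> polar (polar K)"
    by (intro polar_antimono polar_subset_plus_polar)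
  also have "\<dots> \<subseteq> K" using K by (rule polar_polar_subset)
  finally have polar_S_K: "polar ?S \<subseteq> K" .
  have "polar ?S \<subseteq> polar (polar L)"
    by (intro polar_antimono) (subst add.commute, rule polar_subset_plus_polar)
  also have "\<dots> \<subseteq> L" using L by (rule polar_polar_subset)
  finally have polar_S_L: "polar ?S \<subseteq> L" .
  show "u \<in> ?S"
  proof (rule ccontr)
    assume "u \<notin> ?S"
    then obtain v where "v \<in> polar ?S" "1 < inner v u"
      using polar_separation closed convex zero by metis
    moreover have "inner v u \<le> 1" if "v \<in> polar ?S"
      using u that polar_S_K polar_S_L unfolding polar_def by blast
    ultimately show False by simp
  qed
qed

lemma covering_number_cball_polar_submult:
  fixes K :: "'a::euclidean_space set"
  assumes "closed K" "convex K" "0 \<in> interior K" "0 < R"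
  shows "covering_number (cball 0 1) (sdilate r (polar K))
     \<le> covering_number (cball 0 1) (sdilate R (polar K)) *
       covering_number (cball 0 1) (sdilate (r/2) (polar (K \<inter> sdilate R (cball 0 1))))"
proof (rule covering_number_le_mult[where f = "\<lambda>y x. x + (r / (2 * R)) *\<^sub>R y"])
  fix X Y and u :: 'a
  assume X: "cball 0 1 \<subseteq> (\<Union>y\<in>X. (+) y ` sdilate R (polar K))"
    and Y: "cball 0 1 \<subseteq> (\<Union>x\<in>Y. (+) x ` sdilate (r/2) (polar (K \<inter> sdilate R (cball 0 1))))"
    and u: "u \<in> cball 0 1"
  have "compact (polar K)"
    using bounded_polar[OF assms(3)] closed_polar compact_eq_bounded_closed by blast
  then have "polar (K \<inter> cball 0 R) \<subseteq> polar K + polar (cball 0 R)"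
    using assms interior_subset by (intro polar_Int_subset_plus) auto
  then have "polar (K \<inter> cball 0 R) \<subseteq> polar K + cball 0 (1/R)"
    by (simp only: polar_cball[OF assms(4)])
  moreover obtain x l where x: "x \<in> Y" and l: "l \<in> polar (K \<inter> cball 0 R)"
    and "u - x = (r/2) *\<^sub>R l"
    using subsetD[OF Y u] assms(4) by (auto simp: mem_translate_iff mem_sdilate_iff sdilate_cball)
  ultimately obtain k d where k: "k \<in> polar K" and "norm d \<le> 1/R" and "u - x = (r/2) *\<^sub>R (k + d)"
    by (auto elim!: set_plus_elim)
  have "R *\<^sub>R d \<in> cball 0 1"
    using \<open>norm d \<le> 1/R\<close> assms(4) by (simp add: field_simps)
  then obtain y k' where y: "y \<in> X" and k': "k' \<in> polar K" and "R *\<^sub>R d - y = R *\<^sub>R k'"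
    using subsetD[OF X] by (fastforce simp: mem_translate_iff mem_sdilate_iff)
  have "d = (1/R) *\<^sub>R (R *\<^sub>R d)" using assms(4) by simp
  also have "\<dots> = (1/R) *\<^sub>R y + k'"
    using \<open>R *\<^sub>R d - y = R *\<^sub>R k'\<close> assms(4) by (simp add: algebra_simps)
  finally have "u - (x + (r / (2 * R)) *\<^sub>R y) = r *\<^sub>R ((1/2) *\<^sub>R k + (1/2) *\<^sub>R k')"
    using \<open>u - x = (r/2) *\<^sub>R (k + d)\<close> by (simp add: algebra_simps)
  moreover have "(1/2) *\<^sub>R k + (1/2) *\<^sub>R k' \<in> polar K"
    using convex_polar k k' by (intro convexD) auto
  ultimately have "u - (x + (r / (2 * R)) *\<^sub>R y) \<in> sdilate r (polar K)"
    unfolding mem_sdilate_iff by blast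
  then show "\<exists>y\<in>X. \<exists>x\<in>Y. u - (x + (r / (2 * R)) *\<^sub>R y) \<in> sdilate r (polar K)"
    using x y by blast
qed auto

lemma covering_number_symmetric_convex_submult:
  fixes K :: "'a::euclidean_space set"
  assumes "closed K" "convex K" "origin_symmetric K" "K \<noteq> {}" "0 < R"
  shows "covering_number K (sdilate r (cball 0 1))
     \<le> covering_number K (sdilate R (cball 0 1)) *
       covering_number (sdilate 2 K \<inter> sdilate R (cball 0 1)) (sdilate r (cball 0 1))"
proof (rule covering_number_le_mult[where f = "\<lambda>x y. closest_point K x + y"])
  obtain k where "k \<in> K" using assms(4) by blast
  then have "k - k \<in> sdilate 2 K" using assms(2,3) by (intro diff_in_sdilate_2)
  then show "sdilate 2 K \<inter> sdilate R (cball 0 1) \<noteq> {}" using assms(5) by (auto simp: sdilate_cball)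
next
  fix X Y and u :: 'a
  assume X: "K \<subseteq> (\<Union>x\<in>X. (+) x ` sdilate R (cball 0 1))"
    and Y: "sdilate 2 K \<inter> sdilate R (cball 0 1) \<subseteq> (\<Union>y\<in>Y. (+) y ` sdilate r (cball 0 1))"
    and u: "u \<in> K"
  obtain x where x: "x \<in> X" and "dist x u \<le> R"
    using subsetD[OF X u] assms(5) by (auto simp: mem_translate_iff sdilate_cball dist_norm)
  define p where "p = closest_point K x"
  have "p \<in> K" unfolding p_def using assms(1,4) by (rule closest_point_in_set)
  have "dist p u \<le> dist x u"
    using closest_point_lipschitz[OF assms(2,1,4), of x u] closest_point_self[OF u]
    unfolding p_def by simp
  then have "u - p \<in> sdilate 2 K \<inter> sdilate R (cball 0 1)"
    using diff_in_sdilate_2[OF assms(2,3) u \<open>p \<in> K\<close>] \<open>dist x u \<le> R\<close> assms(5)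
    by (simp add: sdilate_cball dist_norm norm_minus_commute)
  then obtain y where "y \<in> Y" "u - p - y \<in> sdilate r (cball 0 1)"
    using Y by (auto simp: mem_translate_iff)
  then show "\<exists>x\<in>X. \<exists>y\<in>Y. u - (closest_point K x + y) \<in> sdilate r (cball 0 1)"
    using x unfolding p_def by (auto simp: algebra_simps)
qed (use assms(4) in auto)

lemma le_mult_prod_chain:
  fixes a c :: "nat \<Rightarrow> 'a::{ordered_comm_semiring, comm_semiring_1, canonically_ordered_monoid_add}"
  assumes "\<And>j. j < s \<Longrightarrow> a j \<le> a (Suc j) * c j"
  shows "a 0 \<le> a s * (\<Prod>j<s. c j)"
  using assms
proof (induction s)
  case (Suc s)
  have "a 0 \<le> a s * (\<Prod>j<s. c j)" using Suc by simp
  also have "\<dots> \<le> a (Suc s) * c s * (\<Prod>j<s. c j)"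
    using Suc.prems by (intro mult_right_mono) simp_all
  finally show ?case by (simp add: mult_ac)
qed simp

theorem lemma7:
  fixes K :: "'a::euclidean_space set" and R :: "nat \<Rightarrow> real" and s :: nat
  assumes "convex_body K" and "origin_symmetric K"
    and "0 < R 0" and "\<forall>j<s. R j < R (Suc j)"
  shows "(covering_number (cball 0 1) (sdilate (R 0) (polar K))
           \<le> covering_number (cball 0 1) (sdilate (R s) (polar K))
             * (\<Prod>j<s. covering_number (cball 0 1)
                   (sdilate (R j / 2) (polar (K \<inter> sdilate (R (Suc j)) (cball 0 1)))))) \<and>
         (covering_number K (sdilate (R 0) (cball 0 1))
           \<le> covering_number K (sdilate (R s) (cball 0 1))
             * (\<Prod>j<s. covering_number (sdilate 2 K \<inter> sdilate (R (Suc j)) (cball 0 1))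
                   (sdilate (R j) (cball 0 1))))"
proof -
  have K: "closed K" "convex K" "K \<noteq> {}" "0 \<in> interior K"
    using assms(1,2) zero_in_interior_symmetric_convex
    unfolding convex_body_def by (auto simp: compact_imp_closed)
  have R_pos: "0 < R j" if "j \<le> s" for j
    using that
  proof (induction j)
    case (Suc j)
    then show ?case using assms(4) by (metis Suc_le_eq Suc_leD less_trans)
  qed (use assms(3) in simp)
  show ?thesis
    by (intro conjI
          le_mult_prod_chain[where a = "\<lambda>j. covering_number (cball 0 1) (sdilate (R j) (polar K))"]
          le_mult_prod_chain[where a = "\<lambda>j. covering_number K (sdilate (R j) (cball 0 1))"])
      (simp_all add: covering_number_cball_polar_submult covering_number_symmetric_convex_submult
        K assms(2) R_pos)
qed

end
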